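(* Let $\Gamma$ be a flower graph and $\Gamma'$ a mandarin graph, both with $N$ edges $e_1,\dots,e_N$. Then $\mathcal{T}_{\mathrm{sym}}(\Gamma)=\mathcal{T}_{\mathrm{s}}(\Gamma')$. In particular, $P_{\Gamma,\mathrm{sym}}=c\,P_{M,\mathrm{s}}$ for some constant $c$.
   Context: A flower graph has one vertex and $N$ loops; a mandarin graph has two vertices and $N$ edges each joining them; edges are oriented and indexed $e_1,\dots,e_N$ in both, and $\deg(v)$ counts edge-ends. For a metric graph $(\Gamma,\boldsymbol{\ell})$ with $e_j\cong[0,\ell_j]$ and the Laplacian $-d^2/dt^2$ under standard vertex conditions (continuity, zero sum of outgoing derivatives), an eigenpair $(k^2,f)$ with $k>0$ has $f|_{e_j}(t)=A_j\cos(kt)+B_j\sin(kt)=C_j\cos(k(\ell_j-t))+D_j\sin(k(\ell_j-t))$, $\mathrm{tr}_k(f)$ the vector of all $(A_j,B_j,C_j,D_j)$ (for $k=0$, constant $c$: $A_j=C_j=c$, $B_j=D_j=0$). $\mathcal{T}(\Gamma)=\{(\exp(ik\boldsymbol{\ell}),\mathrm{tr}_k(f))\}\subset\mathbb{T}^N\times\mathbb{C}^{4N}$ over all $\boldsymbol{\ell}\in\mathbb{R}_+^N$, eigenvalues, and $f$ in eigenspaces (including $0$), with $\exp(ik\boldsymbol{\ell})=(e^{ik\ell_j})_j$; $\mathcal{T}_{\mathbf{z}}(\Gamma)$ the fiber over $\mathbf{z}$. $P_\Gamma(\mathbf{z})=\det(I_{2N}-\mathrm{diag}(z_1..z_N,z_1..z_N)S)$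 with $S$ the real matrix on $(a_1..a_N,b_1..b_N)$: $(S\mathbf{a})_j=\frac{2}{\deg(o(e_j))}(\sum_{o(e_i)=o(e_j)}b_i+\sum_{\tau(e_i)=o(e_j)}a_i)-b_j$, $(S\mathbf{a})_{N+j}=\frac{2}{\deg(\tau(e_j))}(\sum_{o(e_i)=\tau(e_j)}b_i+\sum_{\tau(e_i)=\tau(e_j)}a_i)-a_j$. For the flower, $P_\Gamma=P_{\Gamma,\mathrm{sym}}\prod_{j=1}^N(1-z_j)$ defines $P_{\Gamma,\mathrm{sym}}$, and $\mathcal{T}_{\mathrm{sym}}(\Gamma)=\{(\mathbf{z},\mathbf{x})\in\mathcal{T}(\Gamma):P_{\Gamma,\mathrm{sym}}(\mathbf{z})=0,\ (A_j,B_j)=(C_j,D_j)\ \forall j\}$. For the mandarin, $P_{M,\mathrm{s}}(\mathbf{z})=\sum_{j=1}^N(z_j-1)\prod_{i\ne j}(z_i+1)$ and $\mathcal{T}_{\mathrm{s}}(\Gamma')=\{(\mathbf{z},\mathbf{x})\in\mathcal{T}(\Gamma'):P_{M,\mathrm{s}}(\mathbf{z})=0,\ (A_j,B_j)=(C_j,D_j)\ \forall j\}$. *)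

theory Defs
  imports Complex_Main "Jordan_Normal_Form.Determinant"
begin

text \<open>Edges are indexed 0..N-1 (e_{j+1} in the paper is index j). A graph is given by
 the origin map orig and terminus map term on edge indices. Vectors in C^N are
 functions nat => complex, normalised to 0 outside indices < N.\<close>

definition restr :: "nat \<Rightarrow> (nat \<Rightarrow> 'a::zero) \<Rightarrow> nat \<Rightarrow> 'a" where
  "restr N f = (\<lambda>j. if j < N then f j else 0)"

definition flower_o :: "nat \<Rightarrow> nat" where "flower_o = (\<lambda>_. 0)"
definition flower_t :: "nat \<Rightarrow> nat" where "flower_t = (\<lambda>_. 0)"
definition mandarin_o :: "nat \<Rightarrow> nat" where "mandarin_o = (\<lambda>_. 0)"
definition mandarin_t :: "nat \<Rightarrow> nat" where "mandarin_t = (\<lambda>_. 1)"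

definition deg :: "nat \<Rightarrow> (nat \<Rightarrow> nat) \<Rightarrow> (nat \<Rightarrow> nat) \<Rightarrow> nat \<Rightarrow> nat" where
  "deg N orig term v = card {j. j < N \<and> orig j = v} + card {j. j < N \<and> term j = v}"

text \<open>Coefficients C_j, D_j of f on e_j = [0,l_j] in the representation
  f(t) = C_j cos(k(l_j - t)) + D_j sin(k(l_j - t)), given f(t) = A_j cos(kt) + B_j sin(kt).\<close>
definition coefC :: "(nat \<Rightarrow> real) \<Rightarrow> real \<Rightarrow> (nat \<Rightarrow> complex) \<Rightarrow> (nat \<Rightarrow> complex) \<Rightarrow> nat \<Rightarrow> complex" where
  "coefC l k A B j = A j * complex_of_real (cos (k * l j)) + B j * complex_of_real (sin (k * l j))"
definition coefD :: "(nat \<Rightarrow> real) \<Rightarrow> real \<Rightarrow> (nat \<Rightarrow> complex) \<Rightarrow> (nat \<Rightarrow> complex) \<Rightarrow> nat \<Rightarrow> complex" where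
  "coefD l k A B j = A j * complex_of_real (sin (k * l j)) - B j * complex_of_real (cos (k * l j))"

text \<open>Standard vertex conditions for f|e_j(t) = A_j cos(kt) + B_j sin(kt), k > 0:
  continuity (value f_j(0) = A_j at the origin, f_j(l_j) at the terminus) and zero sum
  of outgoing derivatives (f_j'(0) = k B_j at the origin, -f_j'(l_j) at the terminus).\<close>
definition std_cond :: "nat \<Rightarrow> (nat \<Rightarrow> nat) \<Rightarrow> (nat \<Rightarrow> nat) \<Rightarrow> (nat \<Rightarrow> real) \<Rightarrow> real
    \<Rightarrow> (nat \<Rightarrow> complex) \<Rightarrow> (nat \<Rightarrow> complex) \<Rightarrow> bool" where
  "std_cond N orig term l k A B \<longleftrightarrow>
     (\<exists>F :: nat \<Rightarrow> complex. \<forall>j<N.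
         A j = F (orig j) \<and>
         A j * complex_of_real (cos (k * l j)) + B j * complex_of_real (sin (k * l j)) = F (term j))
   \<and> (\<forall>v. (\<Sum>j | j < N \<and> orig j = v. complex_of_real k * B j)
         + (\<Sum>j | j < N \<and> term j = v.
              - (complex_of_real k * (- A j * complex_of_real (sin (k * l j))
                                      + B j * complex_of_real (cos (k * l j))))) = 0)"

type_synonym trace = "(nat \<Rightarrow> complex) \<times> (nat \<Rightarrow> complex) \<times> (nat \<Rightarrow> complex) \<times> (nat \<Rightarrow> complex)"

definition tr :: "nat \<Rightarrow> (nat \<Rightarrow> real) \<Rightarrow> real \<Rightarrow> (nat \<Rightarrow> complex) \<Rightarrow> (nat \<Rightarrow> complex) \<Rightarrow> trace" where
  "tr N l k A B = (restr N A, restr N B, restr N (coefC l k A B), restr N (coefD l k A B))"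

text \<open>The set T(Gamma): eigenvalues k^2 with k > 0 (there is a nonzero eigenfunction),
  all f in the eigenspace (including 0); and eigenvalue 0 with constant eigenfunctions.\<close>
definition Tset :: "nat \<Rightarrow> (nat \<Rightarrow> nat) \<Rightarrow> (nat \<Rightarrow> nat) \<Rightarrow> ((nat \<Rightarrow> complex) \<times> trace) set" where
  "Tset N orig term =
    {(restr N (\<lambda>j. exp (\<i> * complex_of_real (k * l j))), tr N l k A B) | l k A B.
        (\<forall>j<N. l j > 0) \<and> k > 0
      \<and> (\<exists>A' B'. std_cond N orig term l k A' B' \<and> (\<exists>j<N. A' j \<noteq> 0 \<or> B' j \<noteq> 0))
      \<and> std_cond N orig term l k A B}
   \<union> {(restr N (\<lambda>j. exp (\<i> * complex_of_real (0 * l j))),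
        (restr N (\<lambda>_. c), restr N (\<lambda>_. 0), restr N (\<lambda>_. c), restr N (\<lambda>_. 0))) | l c.
        (\<forall>j<N. l j > 0)}"

text \<open>The matrix S on (a_1..a_N, b_1..b_N) (row/column r < N is a_{r}, r >= N is b_{r-N}).\<close>
definition S_entry :: "nat \<Rightarrow> (nat \<Rightarrow> nat) \<Rightarrow> (nat \<Rightarrow> nat) \<Rightarrow> nat \<Rightarrow> nat \<Rightarrow> real" where
  "S_entry N orig term r c =
    (let j = (if r < N then r else r - N);
         v = (if r < N then orig j else term j);
         d = real (deg N orig term v);
         i = (if c < N then c else c - N)
     in (if c < N then 2 / d * (if term i = v then 1 else 0)
                  else 2 / d * (if orig i = v then 1 else 0))
        - (if i = j \<and> ((r < N) = (N \<le> c)) then 1 else 0))"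

definition S_mat :: "nat \<Rightarrow> (nat \<Rightarrow> nat) \<Rightarrow> (nat \<Rightarrow> nat) \<Rightarrow> real mat" where
  "S_mat N orig term = mat (2 * N) (2 * N) (\<lambda>(r, c). S_entry N orig term r c)"

definition Z_mat :: "nat \<Rightarrow> (nat \<Rightarrow> complex) \<Rightarrow> complex mat" where
  "Z_mat N z = mat (2 * N) (2 * N) (\<lambda>(r, c). if r = c then z (if r < N then r else r - N) else 0)"

definition P_graph :: "nat \<Rightarrow> (nat \<Rightarrow> nat) \<Rightarrow> (nat \<Rightarrow> nat) \<Rightarrow> (nat \<Rightarrow> complex) \<Rightarrow> complex" where
  "P_graph N orig term z =
     det (1\<^sub>m (2 * N) - Z_mat N z * map_mat complex_of_real (S_mat N orig term))"

definition poly_fun :: "nat \<Rightarrow> ((nat \<Rightarrow> complex) \<Rightarrow> complex) \<Rightarrow> bool" where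
  "poly_fun N Q \<longleftrightarrow> (\<exists>(M :: (nat \<Rightarrow> nat) set) (a :: (nat \<Rightarrow> nat) \<Rightarrow> complex). finite M \<and>
      (\<forall>z. Q z = (\<Sum>\<alpha>\<in>M. a \<alpha> * (\<Prod>j<N. z j ^ \<alpha> j))))"

definition P_flower_sym :: "nat \<Rightarrow> (nat \<Rightarrow> complex) \<Rightarrow> complex" where
  "P_flower_sym N = (THE Q. poly_fun N Q \<and>
      (\<forall>z. P_graph N flower_o flower_t z = Q z * (\<Prod>j<N. 1 - z j)))"

definition P_mandarin_s :: "nat \<Rightarrow> (nat \<Rightarrow> complex) \<Rightarrow> complex" where
  "P_mandarin_s N z = (\<Sum>j<N. (z j - 1) * (\<Prod>i\<in>{..<N} - {j}. z i + 1))"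

definition T_flower_sym :: "nat \<Rightarrow> ((nat \<Rightarrow> complex) \<times> trace) set" where
  "T_flower_sym N = {(z, A, B, C, D). (z, A, B, C, D) \<in> Tset N flower_o flower_t
      \<and> P_flower_sym N z = 0 \<and> A = C \<and> B = D}"

definition T_mandarin_s :: "nat \<Rightarrow> ((nat \<Rightarrow> complex) \<times> trace) set" where
  "T_mandarin_s N = {(z, A, B, C, D). (z, A, B, C, D) \<in> Tset N mandarin_o mandarin_t
      \<and> P_mandarin_s N z = 0 \<and> A = C \<and> B = D}"

end

theory Submission
  imports Defs "HOL-Analysis.Elementary_Metric_Spaces"
begin

(* For the flower, S = J/N - (swap of a_j and b_j), so I - diag(z,z) S has the block form
   [[X, Y], [Y, X]] and its determinant is det (X + Y) * det (X - Y).  Here X - Y = diag (1 - z_j)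
   and X + Y = diag (1 + z_j) - (2/N) z 1^T, whose determinant is -P_{M,s}(z)/N; hence
   P_{Gamma,sym} = -P_{M,s}/N, this factor being unique since polynomials are continuous.

   For a symmetric trace, (A_j, B_j) = (C_j, D_j), the standard conditions of both graphs say
   the same thing: all A_j are equal and the B_j sum to zero.  It remains to see that such a
   nonzero mode exists whenever P_{M,s}(e^{ik l}) = 0, as membership in T requires.  With
   theta_j = k l_j and u_j = 2 e^{i theta_j/2} one has e^{i theta_j} + 1 = cos (theta_j/2) u_j and
   e^{i theta_j} - 1 = i sin (theta_j/2) u_j, so P_{M,s} is a nonzero multiple of
   sum_j sin (theta_j/2) prod_{i ~= j} cos (theta_i/2), the sum of the B_j of the symmetric mode
   A_j = prod_i cos (theta_i/2), B_j = sin (theta_j/2) prod_{i ~= j} cos (theta_i/2).  This mode is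
   nonzero unless two of the cosines vanish, and then a mode supported on those two edges works. *)

section \<open>Density and determinants\<close>

lemma continuous_on_eq_off_finite:
  fixes f g :: "'a::{perfect_space, metric_space} \<Rightarrow> 'b::t2_space"
  assumes "continuous_on UNIV f" "continuous_on UNIV g" "finite F"
    and "\<And>t. t \<notin> F \<Longrightarrow> f t = g t"
  shows "f x = g x"
proof -
  have "\<not> x islimpt F"
    using \<open>finite F\<close> by (auto simp: islimpt_eq_infinite_ball intro: exI[of _ 1])
  then have "eventually (\<lambda>t. f t = g t) (at x)"
    unfolding islimpt_iff_eventually by (auto elim!: eventually_mono intro: assms(4))
  moreover have "(f \<longlongrightarrow> f x) (at x)" "(g \<longlongrightarrow> g x) (at x)"
    using assms(1,2) by (simp_all add: continuous_on_eq_continuous_at isCont_def)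
  ultimately show ?thesis
    by (metis tendsto_unique trivial_limit_at tendsto_cong)
qed

lemma continuous_on_det:
  fixes E :: "'b::topological_space \<Rightarrow> nat \<Rightarrow> nat \<Rightarrow> 'a::real_normed_field"
  assumes "\<And>i j. i < n \<Longrightarrow> j < n \<Longrightarrow> continuous_on S (\<lambda>t. E t i j)"
  shows "continuous_on S (\<lambda>t. det (mat n n (\<lambda>(i, j). E t i j)))"
proof -
  have "det (mat n n (\<lambda>(i, j). E t i j)) =
      (\<Sum>p \<in> {p. p permutes {0..<n}}. signof p * (\<Prod>i = 0..<n. E t i (p i)))" for t
    by (subst det_def'[of _ n]) (auto intro!: sum.cong prod.cong dest: permutes_in_image)
  then show ?thesis
    by (simp only:) (intro continuous_intros assms; auto dest: permutes_in_image)
qed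

lemma det_mat_diag: "det (mat_diag n d) = (\<Prod>i<n. d i)"
  by (subst det_upper_triangular[of _ n])
    (auto simp: mat_diag_def prod_list_diag_prod atLeast0LessThan)

lemma det_four_block_mat_circulant:
  fixes A B :: "'a :: idom mat"
  assumes A: "A \<in> carrier_mat n n" and B: "B \<in> carrier_mat n n"
  shows "det (four_block_mat A B B A) = det (A + B) * det (A - B)"
proof -
  let ?M = "four_block_mat A B B A"
  let ?P = "four_block_mat (1\<^sub>m n) (0\<^sub>m n n) (- 1\<^sub>m n) (1\<^sub>m n) :: 'a mat"
  let ?Q = "four_block_mat (1\<^sub>m n) (0\<^sub>m n n) (1\<^sub>m n) (1\<^sub>m n) :: 'a mat"
  have carrier: "?P \<in> carrier_mat (n + n) (n + n)" "?M \<in> carrier_mat (n + n) (n + n)"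
    "?Q \<in> carrier_mat (n + n) (n + n)"
    using A B by auto
  have "?P * ?M = four_block_mat A B (B - A) (A - B)"
    using A B by (subst mult_four_block_mat[of _ n n]) (auto intro!: cong_four_block_mat)
  moreover have "four_block_mat A B (B - A) (A - B) * ?Q = four_block_mat (A + B) B (0\<^sub>m n n) (A - B)"
    using A B by (subst mult_four_block_mat[of _ n n]) (auto intro!: cong_four_block_mat)
  moreover have "det (four_block_mat (A + B) B (0\<^sub>m n n) (A - B)) = det (A + B) * det (A - B)"
    using A B by (intro det_four_block_mat_lower_left_zero[of _ n]) auto
  moreover have "det (?P * ?M * ?Q) = det ?P * det ?M * det ?Q"
    using det_mult[OF mult_carrier_mat[OF carrier(1,2)] carrier(3)] det_mult[OF carrier(1,2)]
    by simp
  moreover have "det ?P = 1" "det ?Q = 1"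
    by (simp_all add: det_four_block_mat_upper_right_zero[of _ n _ n])
  ultimately show ?thesis by simp
qed

definition bordered_mat :: "nat \<Rightarrow> (nat \<Rightarrow> 'a) \<Rightarrow> (nat \<Rightarrow> 'a) \<Rightarrow> 'a :: comm_ring_1 mat" where
  "bordered_mat n d w =
    four_block_mat (mat_diag n d) (mat n 1 (\<lambda>(i, _). w i)) (mat 1 n (\<lambda>_. 1)) (1\<^sub>m 1)"

lemma bordered_mat_carrier: "bordered_mat n d w \<in> carrier_mat (n + 1) (n + 1)"
  unfolding bordered_mat_def by (intro four_block_carrier_mat) auto

lemma det_bordered_mat:
  fixes d w :: "nat \<Rightarrow> 'a :: idom"
  shows "det (bordered_mat n d w) = det (mat_diag n d - mat n n (\<lambda>(i, j). w i))"
proof -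
  define D where "D = mat_diag n d"
  define W where "W = mat n 1 (\<lambda>(i, _). w i)"
  define U where "U = mat 1 n (\<lambda>_. 1 :: 'a)"
  let ?L = "four_block_mat (1\<^sub>m n) (- W) (0\<^sub>m 1 n) (1\<^sub>m 1)"
  have carrier: "D \<in> carrier_mat n n" "W \<in> carrier_mat n 1" "U \<in> carrier_mat 1 n"
    by (simp_all add: D_def W_def U_def)
  have "W * U = mat n n (\<lambda>(i, j). w i)"
    by (rule eq_matI) (auto simp: W_def U_def scalar_prod_def)
  then have L_mult: "?L * bordered_mat n d w =
      four_block_mat (D - mat n n (\<lambda>(i, j). w i)) (0\<^sub>m n 1) U (1\<^sub>m 1)"
    unfolding bordered_mat_def D_def[symmetric] W_def[symmetric] U_def[symmetric] using carrier
    by (subst mult_four_block_mat[OF one_carrier_mat uminus_carrier_mat[OF carrier(2)]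
          zero_carrier_mat one_carrier_mat carrier one_carrier_mat])
      (auto intro!: cong_four_block_mat)
  have "det (?L * bordered_mat n d w) = det ?L * det (bordered_mat n d w)"
    using carrier by (intro det_mult[OF _ bordered_mat_carrier]) auto
  moreover have "det ?L = 1"
    using carrier by (subst det_four_block_mat_lower_left_zero[of _ n]) auto
  moreover have "det (?L * bordered_mat n d w) = det (D - mat n n (\<lambda>(i, j). w i))"
    unfolding L_mult using carrier by (subst det_four_block_mat_upper_right_zero[of _ n]) auto
  ultimately show ?thesis
    by (simp add: D_def)
qed

text \<open>Clearing the border column without dividing by the \<open>d i\<close> costs a factor \<open>\<Prod>i<n. d i\<close>.\<close>

lemma det_bordered_mat_mult:
  fixes n :: nat and d w :: "nat \<Rightarrow> 'a :: idom"
  defines "p \<equiv> \<Prod>i<n. d i"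
  shows "det (bordered_mat n d w) * p = p * (p - (\<Sum>k<n. w k * (\<Prod>i\<in>{..<n} - {k}. d i)))"
proof -
  define D where "D = mat_diag n d"
  define W where "W = mat n 1 (\<lambda>(i, _). w i)"
  define U where "U = mat 1 n (\<lambda>_. 1 :: 'a)"
  define V where "V = mat n 1 (\<lambda>(i, _). w i * (\<Prod>j\<in>{..<n} - {i}. d j))"
  let ?R = "four_block_mat (1\<^sub>m n) (- V) (0\<^sub>m 1 n) (mat 1 1 (\<lambda>_. p))"
  have carrier: "D \<in> carrier_mat n n" "W \<in> carrier_mat n 1" "U \<in> carrier_mat 1 n"
    "V \<in> carrier_mat n 1"
    by (simp_all add: D_def W_def U_def V_def)
  have "D * V = p \<cdot>\<^sub>m W"
    unfolding D_def mat_diag_mult_left[OF carrier(4)]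
    by (rule eq_matI) (auto simp: V_def W_def p_def prod.remove[of "{..<n}"])
  moreover have "U * V = mat 1 1 (\<lambda>_. \<Sum>k<n. w k * (\<Prod>i\<in>{..<n} - {k}. d i))"
    by (rule eq_matI) (auto simp: U_def V_def scalar_prod_def atLeast0LessThan)
  ultimately have R_mult: "bordered_mat n d w * ?R = four_block_mat D (0\<^sub>m n 1) U
      (mat 1 1 (\<lambda>_. p - (\<Sum>k<n. w k * (\<Prod>i\<in>{..<n} - {k}. d i))))"
    unfolding bordered_mat_def D_def[symmetric] W_def[symmetric] U_def[symmetric] using carrier
    by (subst mult_four_block_mat[OF carrier(1-3) one_carrier_mat one_carrier_mat
          uminus_carrier_mat[OF carrier(4)] zero_carrier_mat mat_carrier])
      (auto intro!: cong_four_block_mat eq_matI simp: scalar_prod_def W_def)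
  have "det (bordered_mat n d w * ?R) = det (bordered_mat n d w) * det ?R"
    using carrier by (intro det_mult[OF bordered_mat_carrier]) auto
  moreover have "det ?R = p"
    using carrier by (subst det_four_block_mat_lower_left_zero[of _ n]) (auto simp: det_single)
  moreover have "det (bordered_mat n d w * ?R) = p * (p - (\<Sum>k<n. w k * (\<Prod>i\<in>{..<n} - {k}. d i)))"
    unfolding R_mult using carrier
    by (subst det_four_block_mat_upper_right_zero[of _ n]) (auto simp: det_single det_mat_diag D_def p_def)
  ultimately show ?thesis
    by simp
qed

lemma det_diag_minus_rank_one:
  fixes d w :: "nat \<Rightarrow> 'a :: real_normed_field"
  shows "det (mat_diag n d - mat n n (\<lambda>(i, j). w i)) =
    (\<Prod>i<n. d i) - (\<Sum>k<n. w k * (\<Prod>i\<in>{..<n} - {k}. d i))"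
proof -
  define lhs where "lhs t = det (mat_diag n (\<lambda>i. d i + t) - mat n n (\<lambda>(i, j). w i))" for t
  define rhs where "rhs t = (\<Prod>i<n. d i + t) - (\<Sum>k<n. w k * (\<Prod>i\<in>{..<n} - {k}. d i + t))" for t
  have "lhs t = rhs t" for t
  proof (rule continuous_on_eq_off_finite[of lhs rhs "(\<lambda>i. - d i) ` {..<n}"])
    have "mat_diag n (\<lambda>i. d i + t) - mat n n (\<lambda>(i, j). w i) =
        mat n n (\<lambda>(i, j). of_bool (i = j) * (d i + t) - w i)" for t
      by (auto simp: mat_diag_def)
    then show "continuous_on UNIV lhs"
      unfolding lhs_def by (simp only:) (intro continuous_on_det continuous_intros)
  next
    fix t assume "t \<notin> (\<lambda>i. - d i) ` {..<n}"
    then have "(\<Prod>i<n. d i + t) \<noteq> 0"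
      by (force simp: add_eq_0_iff2 image_iff)
    then show "lhs t = rhs t"
      using det_bordered_mat_mult[of n "\<lambda>i. d i + t" w] det_bordered_mat[of n "\<lambda>i. d i + t" w]
      by (simp add: lhs_def rhs_def)
  qed (auto simp: rhs_def intro!: continuous_intros)
  from this[of 0] show ?thesis by (simp add: lhs_def rhs_def)
qed

section \<open>The polynomial of the flower\<close>

lemma S_entry_flower:
  assumes "N \<ge> 1"
  shows "S_entry N flower_o flower_t r c = 1 / real N -
    of_bool ((if c < N then c else c - N) = (if r < N then r else r - N) \<and> (r < N \<longleftrightarrow> N \<le> c))"
  using assms by (simp add: S_entry_def Let_def deg_def flower_o_def flower_t_def)

lemma Z_mat_eq_mat_diag: "Z_mat N z = mat_diag (2 * N) (\<lambda>r. z (if r < N then r else r - N))"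
  by (auto simp: Z_mat_def mat_diag_def)

lemma flower_matrix_eq_four_block:
  fixes z :: "nat \<Rightarrow> complex"
  assumes "N \<ge> 1"
  defines "X \<equiv> mat N N (\<lambda>(i, j). of_bool (i = j) - z i / of_nat N)"
    and "Y \<equiv> mat N N (\<lambda>(i, j). of_bool (i = j) * z i - z i / of_nat N)"
  shows "1\<^sub>m (2 * N) - Z_mat N z * map_mat complex_of_real (S_mat N flower_o flower_t) =
    four_block_mat X Y Y X"
proof -
  have S_carrier: "map_mat complex_of_real (S_mat N flower_o flower_t) \<in> carrier_mat (2 * N) (2 * N)"
    by (simp add: S_mat_def)
  show ?thesis
    unfolding Z_mat_eq_mat_diag mat_diag_mult_left[OF S_carrier]
    using assms by (intro eq_matI) (auto simp: S_mat_def S_entry_flower X_def Y_def right_diff_distrib)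
qed

lemma prod_one_plus_minus_sum_eq_P_mandarin_s:
  fixes z :: "nat \<Rightarrow> complex"
  assumes "N \<ge> 1"
  shows "(\<Prod>i<N. 1 + z i) - (\<Sum>k<N. 2 * z k / of_nat N * (\<Prod>i\<in>{..<N} - {k}. 1 + z i))
    = - P_mandarin_s N z / of_nat N" (is "?Q = _")
proof -
  have N: "of_nat N \<noteq> (0 :: complex)"
    using assms by simp
  have "(\<Sum>k<N. (1 + z k) * (\<Prod>i\<in>{..<N} - {k}. 1 + z i)) = (\<Sum>k<N. \<Prod>i<N. 1 + z i)"
    by (intro sum.cong refl) (simp add: prod.remove)
  then have "of_nat N * (\<Prod>i<N. 1 + z i) = (\<Sum>k<N. (1 + z k) * (\<Prod>i\<in>{..<N} - {k}. 1 + z i))"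
    by simp
  moreover have "of_nat N * (\<Sum>k<N. 2 * z k / of_nat N * (\<Prod>i\<in>{..<N} - {k}. 1 + z i)) =
      (\<Sum>k<N. 2 * z k * (\<Prod>i\<in>{..<N} - {k}. 1 + z i))"
    using N by (simp add: sum_distrib_left)
  ultimately have "of_nat N * ?Q = - P_mandarin_s N z"
    by (simp add: right_diff_distrib P_mandarin_s_def sum_subtractf[symmetric] sum_negf[symmetric]
        algebra_simps)
  then show ?thesis
    by (subst nonzero_eq_divide_eq[OF N]) (simp only: mult.commute)
qed

lemma P_graph_flower:
  assumes "N \<ge> 1"
  shows "P_graph N flower_o flower_t z = - P_mandarin_s N z / of_nat N * (\<Prod>j<N. 1 - z j)"
proof -
  define X where "X = mat N N (\<lambda>(i, j). of_bool (i = j) - z i / of_nat N)"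
  define Y where "Y = mat N N (\<lambda>(i, j). of_bool (i = j) * z i - z i / of_nat N)"
  have carrier: "X \<in> carrier_mat N N" "Y \<in> carrier_mat N N"
    by (simp_all add: X_def Y_def)
  have "X + Y = mat_diag N (\<lambda>i. 1 + z i) - mat N N (\<lambda>(i, j). 2 * z i / of_nat N)"
    by (auto simp: X_def Y_def mat_diag_def)
  moreover have "X - Y = mat_diag N (\<lambda>i. 1 - z i)"
    by (auto simp: X_def Y_def mat_diag_def)
  ultimately have "P_graph N flower_o flower_t z =
      ((\<Prod>i<N. 1 + z i) - (\<Sum>k<N. 2 * z k / of_nat N * (\<Prod>i\<in>{..<N} - {k}. 1 + z i))) *
      (\<Prod>j<N. 1 - z j)"
    unfolding P_graph_def flower_matrix_eq_four_block[OF assms] X_def[symmetric] Y_def[symmetric]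
      det_four_block_mat_circulant[OF carrier]
    by (simp add: det_diag_minus_rank_one det_mat_diag)
  also have "\<dots> = - P_mandarin_s N z / of_nat N * (\<Prod>j<N. 1 - z j)"
    by (simp only: prod_one_plus_minus_sum_eq_P_mandarin_s[OF assms])
  finally show ?thesis .
qed

lemma poly_fun_const: "poly_fun N (\<lambda>z. c)"
  unfolding poly_fun_def by (intro exI[of _ "{\<lambda>_. 0}"] exI[of _ "\<lambda>_. c"]) simp

lemma poly_fun_var:
  assumes "j < N"
  shows "poly_fun N (\<lambda>z. z j)"
  unfolding poly_fun_def
proof (intro exI[of _ "{\<lambda>i. of_bool (i = j)}"] exI[of _ "\<lambda>_. 1"] conjI allI)
  fix z :: "nat \<Rightarrow> complex"
  have "(\<Prod>i<N. z i ^ of_bool (i = j)) = (\<Prod>i<N. if i = j then z i else 1)"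
    by (intro prod.cong) auto
  also have "\<dots> = z j"
    using assms by (subst prod.delta) auto
  finally show "z j = (\<Sum>\<alpha>\<in>{\<lambda>i. of_bool (i = j)}. 1 * (\<Prod>i<N. z i ^ \<alpha> i))"
    by simp
qed simp

lemma poly_fun_add:
  assumes "poly_fun N f" "poly_fun N g"
  shows "poly_fun N (\<lambda>z. f z + g z)"
proof -
  obtain M1 a1 where M1: "finite M1" "\<And>z. f z = (\<Sum>\<alpha>\<in>M1. a1 \<alpha> * (\<Prod>j<N. z j ^ \<alpha> j))"
    using assms(1) unfolding poly_fun_def by blast
  obtain M2 a2 where M2: "finite M2" "\<And>z. g z = (\<Sum>\<alpha>\<in>M2. a2 \<alpha> * (\<Prod>j<N. z j ^ \<alpha> j))"
    using assms(2) unfolding poly_fun_def by blast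
  let ?a = "\<lambda>\<alpha>. (if \<alpha> \<in> M1 then a1 \<alpha> else 0) + (if \<alpha> \<in> M2 then a2 \<alpha> else 0)"
  show ?thesis
    unfolding poly_fun_def
  proof (intro exI[of _ "M1 \<union> M2"] exI[of _ ?a] conjI allI)
    fix z :: "nat \<Rightarrow> complex"
    let ?m = "\<lambda>\<alpha>. \<Prod>j<N. z j ^ \<alpha> j"
    have "(\<Sum>\<alpha>\<in>M1 \<union> M2. ?a \<alpha> * ?m \<alpha>) =
        (\<Sum>\<alpha>\<in>M1 \<union> M2. if \<alpha> \<in> M1 then a1 \<alpha> * ?m \<alpha> else 0) +
        (\<Sum>\<alpha>\<in>M1 \<union> M2. if \<alpha> \<in> M2 then a2 \<alpha> * ?m \<alpha> else 0)"
      by (subst sum.distrib[symmetric]) (intro sum.cong refl, auto simp: algebra_simps)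
    also have "\<dots> = (\<Sum>\<alpha>\<in>M1. a1 \<alpha> * ?m \<alpha>) + (\<Sum>\<alpha>\<in>M2. a2 \<alpha> * ?m \<alpha>)"
      using M1(1) M2(1)
      by (simp add: sum.inter_restrict[symmetric] Int_absorb1 Int_absorb2 Int_commute)
    finally show "f z + g z = (\<Sum>\<alpha>\<in>M1 \<union> M2. ?a \<alpha> * ?m \<alpha>)"
      using M1(2) M2(2) by simp
  qed (use M1 M2 in simp)
qed

lemma poly_fun_mult:
  assumes "poly_fun N f" "poly_fun N g"
  shows "poly_fun N (\<lambda>z. f z * g z)"
proof -
  obtain M1 a1 where M1: "finite M1" "\<And>z. f z = (\<Sum>\<alpha>\<in>M1. a1 \<alpha> * (\<Prod>j<N. z j ^ \<alpha> j))"
    using assms(1) unfolding poly_fun_def by blast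
  obtain M2 a2 where M2: "finite M2" "\<And>z. g z = (\<Sum>\<alpha>\<in>M2. a2 \<alpha> * (\<Prod>j<N. z j ^ \<alpha> j))"
    using assms(2) unfolding poly_fun_def by blast
  define h :: "(nat \<Rightarrow> nat) \<times> (nat \<Rightarrow> nat) \<Rightarrow> nat \<Rightarrow> nat"
    where "h \<beta> = (\<lambda>i. fst \<beta> i + snd \<beta> i)" for \<beta>
  define a where "a \<gamma> = (\<Sum>\<beta>\<in>{\<beta> \<in> M1 \<times> M2. h \<beta> = \<gamma>}. a1 (fst \<beta>) * a2 (snd \<beta>))" for \<gamma>
  have fin: "finite (M1 \<times> M2)"
    using M1(1) M2(1) by simp
  show ?thesis
    unfolding poly_fun_def
  proof (intro exI[of _ "h ` (M1 \<times> M2)"] exI[of _ a] conjI allI)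
    fix z :: "nat \<Rightarrow> complex"
    let ?m = "\<lambda>\<alpha>. \<Prod>j<N. z j ^ \<alpha> j"
    have m_h: "?m (fst \<beta>) * ?m (snd \<beta>) = ?m (h \<beta>)" for \<beta>
      unfolding h_def by (simp add: power_add prod.distrib)
    have "f z * g z = (\<Sum>\<beta>\<in>M1 \<times> M2. a1 (fst \<beta>) * a2 (snd \<beta>) * ?m (h \<beta>))"
      unfolding M1(2) M2(2) sum_product sum.cartesian_product
      by (intro sum.cong refl) (simp add: m_h[symmetric] algebra_simps split: prod.splits)
    also have "\<dots> = (\<Sum>\<gamma>\<in>h ` (M1 \<times> M2). \<Sum>\<beta>\<in>{\<beta> \<in> M1 \<times> M2. h \<beta> = \<gamma>}.
        a1 (fst \<beta>) * a2 (snd \<beta>) * ?m (h \<beta>))"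
      by (rule sum.image_gen[OF fin])
    also have "\<dots> = (\<Sum>\<gamma>\<in>h ` (M1 \<times> M2). a \<gamma> * ?m \<gamma>)"
      unfolding a_def sum_distrib_right by (intro sum.cong refl) auto
    finally show "f z * g z = (\<Sum>\<gamma>\<in>h ` (M1 \<times> M2). a \<gamma> * ?m \<gamma>)" .
  qed (use fin in simp)
qed

lemma poly_fun_sum:
  "finite A \<Longrightarrow> (\<And>i. i \<in> A \<Longrightarrow> poly_fun N (f i)) \<Longrightarrow> poly_fun N (\<lambda>z. \<Sum>i\<in>A. f i z)"
  by (induction A rule: finite_induct) (auto intro: poly_fun_add poly_fun_const)

lemma poly_fun_prod:
  "finite A \<Longrightarrow> (\<And>i. i \<in> A \<Longrightarrow> poly_fun N (f i)) \<Longrightarrow> poly_fun N (\<lambda>z. \<Prod>i\<in>A. f i z)"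
  by (induction A rule: finite_induct) (auto intro: poly_fun_mult poly_fun_const)

lemma poly_fun_P_mandarin_s: "poly_fun N (\<lambda>z. c * P_mandarin_s N z)"
proof -
  have "P_mandarin_s N z = (\<Sum>j<N. (z j + (- 1)) * (\<Prod>i\<in>{..<N} - {j}. z i + 1))" for z
    by (simp add: P_mandarin_s_def)
  then show ?thesis
    by (simp only:) (intro poly_fun_mult poly_fun_const poly_fun_sum poly_fun_prod poly_fun_add
        poly_fun_var; simp)
qed

lemma continuous_on_poly_fun_line:
  assumes "poly_fun N Q"
  shows "continuous_on UNIV (\<lambda>t. Q (\<lambda>j. z j + t))"
proof -
  obtain M a where "\<And>z. Q z = (\<Sum>\<alpha>\<in>M. a \<alpha> * (\<Prod>j<N. z j ^ \<alpha> j))"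
    using assms unfolding poly_fun_def by blast
  then show ?thesis
    by (simp only:) (intro continuous_intros)
qed

lemma poly_fun_mult_prod_cancel:
  assumes "poly_fun N Q" "poly_fun N R"
    and eq: "\<And>z. Q z * (\<Prod>j<N. 1 - z j) = R z * (\<Prod>j<N. 1 - z j)"
  shows "Q = R"
proof
  fix z :: "nat \<Rightarrow> complex"
  have "Q (\<lambda>j. z j + t) = R (\<lambda>j. z j + t)" for t
  proof (rule continuous_on_eq_off_finite[of "\<lambda>t. Q (\<lambda>j. z j + t)" "\<lambda>t. R (\<lambda>j. z j + t)"
        "(\<lambda>j. 1 - z j) ` {..<N}"])
    fix t assume "t \<notin> (\<lambda>j. 1 - z j) ` {..<N}"
    then have "(\<Prod>j<N. 1 - (z j + t)) \<noteq> 0"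
      by (force simp: algebra_simps image_iff)
    then show "Q (\<lambda>j. z j + t) = R (\<lambda>j. z j + t)"
      using eq[of "\<lambda>j. z j + t"] by simp
  qed (use assms in \<open>auto intro: continuous_on_poly_fun_line\<close>)
  from this[of 0] show "Q z = R z"
    by simp
qed

lemma P_flower_sym_eq:
  assumes "N \<ge> 1"
  shows "P_flower_sym N = (\<lambda>z. - P_mandarin_s N z / of_nat N)"
  unfolding P_flower_sym_def
proof (rule the_equality)
  have "(\<lambda>z. - P_mandarin_s N z / of_nat N) = (\<lambda>z. (- 1 / of_nat N) * P_mandarin_s N z)"
    by simp
  then show "poly_fun N (\<lambda>z. - P_mandarin_s N z / of_nat N) \<and>
      (\<forall>z. P_graph N flower_o flower_t z = - P_mandarin_s N z / of_nat N * (\<Prod>j<N. 1 - z j))"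
    using poly_fun_P_mandarin_s P_graph_flower[OF assms] by metis
next
  fix Q
  assume "poly_fun N Q \<and> (\<forall>z. P_graph N flower_o flower_t z = Q z * (\<Prod>j<N. 1 - z j))"
  then show "Q = (\<lambda>z. - P_mandarin_s N z / of_nat N)"
    using P_graph_flower[OF assms] poly_fun_P_mandarin_s[of N "- 1 / of_nat N"]
    by (intro poly_fun_mult_prod_cancel[of N]) auto
qed

section \<open>Symmetric eigenfunctions\<close>

definition symmetric_trace ::
    "nat \<Rightarrow> (nat \<Rightarrow> real) \<Rightarrow> real \<Rightarrow> (nat \<Rightarrow> complex) \<Rightarrow> (nat \<Rightarrow> complex) \<Rightarrow> bool"
  where "symmetric_trace N l k A B \<longleftrightarrow> (\<forall>j<N. coefC l k A B j = A j \<and> coefD l k A B j = B j)"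

definition balanced_mode :: "nat \<Rightarrow> (nat \<Rightarrow> complex) \<Rightarrow> (nat \<Rightarrow> complex) \<Rightarrow> bool"
  where "balanced_mode N A B \<longleftrightarrow> (\<exists>a. \<forall>j<N. A j = a) \<and> (\<Sum>j<N. B j) = 0"

definition symmetric_std_cond_balanced :: "nat \<Rightarrow> (nat \<Rightarrow> nat) \<Rightarrow> (nat \<Rightarrow> nat) \<Rightarrow> bool" where
  "symmetric_std_cond_balanced N orig term \<longleftrightarrow>
    (\<forall>l k A B. k > 0 \<longrightarrow> symmetric_trace N l k A B \<longrightarrow>
      (std_cond N orig term l k A B \<longleftrightarrow> balanced_mode N A B))"

lemma std_cond_symmetric_iff:
  assumes "k > 0" and sym: "symmetric_trace N l k A B"
  shows "std_cond N orig term l k A B \<longleftrightarrow>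
    (\<exists>F. \<forall>j<N. A j = F (orig j) \<and> A j = F (term j)) \<and>
    (\<forall>v. (\<Sum>j | j < N \<and> orig j = v. B j) + (\<Sum>j | j < N \<and> term j = v. B j) = 0)"
proof -
  have endpoint_value: "A j * complex_of_real (cos (k * l j)) + B j * complex_of_real (sin (k * l j)) = A j"
    if "j < N" for j
    using sym that by (simp add: symmetric_trace_def coefC_def)
  have endpoint_derivative: "- (complex_of_real k * (- A j * complex_of_real (sin (k * l j))
      + B j * complex_of_real (cos (k * l j)))) = complex_of_real k * B j" if "j < N" for j
    using sym that by (simp add: symmetric_trace_def coefD_def algebra_simps)
  have continuity: "(\<forall>j<N. A j = F (orig j) \<and>
        A j * complex_of_real (cos (k * l j)) + B j * complex_of_real (sin (k * l j)) = F (term j))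
      \<longleftrightarrow> (\<forall>j<N. A j = F (orig j) \<and> A j = F (term j))" for F
    using endpoint_value by metis
  have kirchhoff: "(\<Sum>j | j < N \<and> orig j = v. complex_of_real k * B j)
      + (\<Sum>j | j < N \<and> term j = v. - (complex_of_real k * (- A j * complex_of_real (sin (k * l j))
          + B j * complex_of_real (cos (k * l j)))))
      = complex_of_real k * ((\<Sum>j | j < N \<and> orig j = v. B j) + (\<Sum>j | j < N \<and> term j = v. B j))"
    for v
  proof -
    have "(\<Sum>j | j < N \<and> term j = v. - (complex_of_real k * (- A j * complex_of_real (sin (k * l j))
          + B j * complex_of_real (cos (k * l j))))) = (\<Sum>j | j < N \<and> term j = v. complex_of_real k * B j)"
      by (intro sum.cong refl endpoint_derivative) simp
    then show ?thesis
      by (simp add: sum_distrib_left distrib_left)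
  qed
  show ?thesis
    unfolding std_cond_def continuity kirchhoff using \<open>k > 0\<close> by simp
qed

lemma symmetric_std_cond_balanced_flower: "symmetric_std_cond_balanced N flower_o flower_t"
  unfolding symmetric_std_cond_balanced_def balanced_mode_def
  by (auto simp: std_cond_symmetric_iff flower_o_def flower_t_def Collect_conj_eq lessThan_def)

lemma symmetric_std_cond_balanced_mandarin: "symmetric_std_cond_balanced N mandarin_o mandarin_t"
  unfolding symmetric_std_cond_balanced_def balanced_mode_def
  by (auto simp: std_cond_symmetric_iff mandarin_o_def mandarin_t_def Collect_conj_eq lessThan_def)

lemma cis_double_plus_one: "cis (2 * x) + 1 = 2 * complex_of_real (cos x) * cis x"
  by (simp add: complex_eq_iff cos_double_cos sin_double power2_eq_square)

lemma cis_double_minus_one: "cis (2 * x) - 1 = \<i> * (2 * complex_of_real (sin x) * cis x)"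
  by (simp add: complex_eq_iff cos_double_sin sin_double power2_eq_square)

lemma P_mandarin_s_half_angles:
  "P_mandarin_s N (\<lambda>j. cis (2 * x j)) =
    \<i> * (\<Prod>j<N. 2 * cis (x j)) * complex_of_real (\<Sum>j<N. sin (x j) * (\<Prod>i\<in>{..<N} - {j}. cos (x i)))"
proof -
  have "(cis (2 * x j) - 1) * (\<Prod>i\<in>{..<N} - {j}. cis (2 * x i) + 1) =
      \<i> * (\<Prod>j<N. 2 * cis (x j)) * complex_of_real (sin (x j) * (\<Prod>i\<in>{..<N} - {j}. cos (x i)))"
    if "j < N" for j
  proof -
    have "(\<Prod>j<N. 2 * cis (x j)) = 2 * cis (x j) * (\<Prod>i\<in>{..<N} - {j}. 2 * cis (x i))"
      using that by (simp add: prod.remove)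
    then show ?thesis
      by (simp add: cis_double_minus_one cis_double_plus_one prod.distrib)
  qed
  then show ?thesis
    by (simp add: P_mandarin_s_def sum_distrib_left)
qed

lemma half_angle_edge_symmetric:
  assumes "A j = complex_of_real (p * cos (k * l j / 2))"
    and "B j = complex_of_real (p * sin (k * l j / 2))"
  shows "coefC l k A B j = A j \<and> coefD l k A B j = B j"
proof -
  define x where "x = k * l j / 2"
  have kl: "k * l j = 2 * x" and A: "A j = complex_of_real (p * cos x)"
    and B: "B j = complex_of_real (p * sin x)"
    using assms by (simp_all add: x_def)
  have "coefC l k A B j = complex_of_real (p * (cos (2 * x) * cos x + sin (2 * x) * sin x))"
    using A B by (simp add: coefC_def kl algebra_simps)
  also have "\<dots> = A j"
    using A cos_diff[of "2 * x" x] by simp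
  moreover have "coefD l k A B j = complex_of_real (p * (sin (2 * x) * cos x - cos (2 * x) * sin x))"
    using A B by (simp add: coefD_def kl algebra_simps)
  moreover have "\<dots> = B j"
    using B sin_diff[of "2 * x" x] by simp
  ultimately show ?thesis
    by simp
qed

lemma symmetric_mode_two_nodes:
  assumes "j1 < N" "j2 < N" "j1 \<noteq> j2" "cos (k * l j1 / 2) = 0" "cos (k * l j2 / 2) = 0"
  shows "\<exists>A B. symmetric_trace N l k A B \<and> balanced_mode N A B \<and> (\<exists>j<N. A j \<noteq> 0 \<or> B j \<noteq> 0)"
proof -
  define x where "x j = k * l j / 2" for j
  define p where "p j = (if j = j1 then sin (x j1) else if j = j2 then - sin (x j2) else 0)" for j
  define A :: "nat \<Rightarrow> complex" where "A j = complex_of_real (p j * cos (x j))" for j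
  define B :: "nat \<Rightarrow> complex" where "B j = complex_of_real (p j * sin (x j))" for j
  have sin_sq: "sin (x j1) * sin (x j1) = 1" "sin (x j2) * sin (x j2) = 1"
    using assms(4,5) sin_cos_squared_add[of "x j1"] sin_cos_squared_add[of "x j2"]
    by (simp_all add: x_def power2_eq_square)
  have A0: "A j = 0" for j
    using assms(4,5) by (simp add: A_def p_def x_def)
  have "B j = (if j = j1 then 1 else 0) + (if j = j2 then - 1 else 0)" for j
    using sin_sq assms(3) by (simp add: B_def p_def del: of_real_mult)
  then have "(\<Sum>j<N. B j) = 0" "B j1 \<noteq> 0"
    using assms(1-3) by (simp_all add: sum.distrib)
  moreover have "coefC l k A B j = A j \<and> coefD l k A B j = B j" for j
    by (rule half_angle_edge_symmetric[where p = "p j"]) (simp_all add: A_def B_def x_def)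
  ultimately show ?thesis
    unfolding symmetric_trace_def balanced_mode_def using assms(1) A0 by blast
qed

lemma symmetric_mode_at_most_one_node:
  assumes "N \<ge> 1" and P: "P_mandarin_s N (\<lambda>j. exp (\<i> * complex_of_real (k * l j))) = 0"
    and nodes: "\<And>j1 j2. j1 < N \<Longrightarrow> j2 < N \<Longrightarrow> cos (k * l j1 / 2) = 0 \<Longrightarrow>
      cos (k * l j2 / 2) = 0 \<Longrightarrow> j1 = j2"
  shows "\<exists>A B. symmetric_trace N l k A B \<and> balanced_mode N A B \<and> (\<exists>j<N. A j \<noteq> 0 \<or> B j \<noteq> 0)"
proof -
  define x where "x j = k * l j / 2" for j
  define p where "p j = (\<Prod>i\<in>{..<N} - {j}. cos (x i))" for j
  define A :: "nat \<Rightarrow> complex" where "A j = complex_of_real (p j * cos (x j))" for j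
  define B :: "nat \<Rightarrow> complex" where "B j = complex_of_real (p j * sin (x j))" for j
  have A: "A j = complex_of_real (\<Prod>i<N. cos (x i))" if "j < N" for j
    using that by (simp add: A_def p_def prod.remove mult.commute)
  have "\<i> * (\<Prod>j<N. 2 * cis (x j)) * complex_of_real (\<Sum>j<N. sin (x j) * p j) = 0"
    using P P_mandarin_s_half_angles[of N x] by (simp add: x_def p_def cis_conv_exp)
  then have sum_B: "(\<Sum>j<N. B j) = 0"
    by (simp add: B_def mult.commute)
  have "\<exists>j<N. A j \<noteq> 0 \<or> B j \<noteq> 0"
  proof (cases "(\<Prod>i<N. cos (x i)) = 0")
    case False
    then show ?thesis
      using A[of 0] \<open>N \<ge> 1\<close> by (intro exI[of _ 0]) simp
  next
    case True
    then obtain j0 where j0: "j0 < N" "cos (x j0) = 0"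
      by auto
    have "cos (x i) \<noteq> 0" if "i < N" "i \<noteq> j0" for i
      using nodes[of i j0] that j0 by (auto simp: x_def)
    then have "p j0 \<noteq> 0"
      by (simp add: p_def prod_zero_iff)
    moreover have "sin (x j0) \<noteq> 0"
      using j0(2) sin_cos_squared_add[of "x j0"] by auto
    ultimately show ?thesis
      using j0(1) by (auto simp: B_def)
  qed
  moreover have "coefC l k A B j = A j \<and> coefD l k A B j = B j" for j
    by (rule half_angle_edge_symmetric[where p = "p j"]) (simp_all add: A_def B_def x_def)
  ultimately show ?thesis
    unfolding symmetric_trace_def balanced_mode_def using A sum_B by blast
qed

lemma symmetric_mode_exists:
  assumes "N \<ge> 1" "P_mandarin_s N (\<lambda>j. exp (\<i> * complex_of_real (k * l j))) = 0"
  shows "\<exists>A B. symmetric_trace N l k A B \<and> balanced_mode N A B \<and> (\<exists>j<N. A j \<noteq> 0 \<or> B j \<noteq> 0)"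
proof (cases "\<exists>j1<N. \<exists>j2<N. j1 \<noteq> j2 \<and> cos (k * l j1 / 2) = 0 \<and> cos (k * l j2 / 2) = 0")
  case True
  then obtain j1 j2 where "j1 < N" "j2 < N" "j1 \<noteq> j2" "cos (k * l j1 / 2) = 0" "cos (k * l j2 / 2) = 0"
    by blast
  then show ?thesis
    by (rule symmetric_mode_two_nodes)
next
  case False
  then have "j1 = j2" if "j1 < N" "j2 < N" "cos (k * l j1 / 2) = 0" "cos (k * l j2 / 2) = 0" for j1 j2
    using that by blast
  then show ?thesis
    by (rule symmetric_mode_at_most_one_node[OF assms])
qed

lemma P_mandarin_s_restr: "P_mandarin_s N (restr N z) = P_mandarin_s N z"
  unfolding P_mandarin_s_def restr_def by (intro sum.cong refl arg_cong2[where f = "(*)"] prod.cong) auto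

lemma symmetric_trace_if_tr_eq:
  assumes "tr N l k A0 B0 = (A, B, A, B)"
  shows "symmetric_trace N l k A0 B0"
proof -
  have "restr N A0 = restr N (coefC l k A0 B0)" "restr N B0 = restr N (coefD l k A0 B0)"
    using assms by (auto simp: tr_def)
  then show ?thesis
    unfolding symmetric_trace_def by (metis restr_def)
qed

lemma symmetric_std_cond_balancedD:
  assumes "symmetric_std_cond_balanced N orig term" "k > 0" "symmetric_trace N l k A B"
  shows "std_cond N orig term l k A B \<longleftrightarrow> balanced_mode N A B"
  using assms unfolding symmetric_std_cond_balanced_def by blast

text \<open>The nonzero eigenfunction that \<open>Tset\<close> demands for the second graph is taken from
  \<open>symmetric_mode_exists\<close>, because the given trace may well be zero.\<close>

lemma Tset_symmetric_transfer:
  assumes "N \<ge> 1" and bal1: "symmetric_std_cond_balanced N o1 t1"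
    and bal2: "symmetric_std_cond_balanced N o2 t2"
    and T: "(z, A, B, A, B) \<in> Tset N o1 t1" and P: "P_mandarin_s N z = 0"
  shows "(z, A, B, A, B) \<in> Tset N o2 t2"
proof -
  from T consider (positive) l k A0 B0
    where "(z, A, B, A, B) = (restr N (\<lambda>j. exp (\<i> * complex_of_real (k * l j))), tr N l k A0 B0)"
      "\<forall>j<N. l j > 0" "k > 0" "std_cond N o1 t1 l k A0 B0"
    | (zero) "(z, A, B, A, B) \<in> {(restr N (\<lambda>j. exp (\<i> * complex_of_real (0 * l j))),
        (restr N (\<lambda>_. c), restr N (\<lambda>_. 0), restr N (\<lambda>_. c), restr N (\<lambda>_. 0))) | l c.
        (\<forall>j<N. l j > 0)}"
    unfolding Tset_def by blast
  then show ?thesis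
  proof cases
    case positive
    then have z: "z = restr N (\<lambda>j. exp (\<i> * complex_of_real (k * l j)))"
      and tr: "tr N l k A0 B0 = (A, B, A, B)"
      by simp_all
    have std2: "std_cond N o2 t2 l k A0 B0"
      using positive symmetric_std_cond_balancedD[OF bal1] symmetric_std_cond_balancedD[OF bal2]
        symmetric_trace_if_tr_eq[OF tr] by blast
    obtain A' B' where "symmetric_trace N l k A' B'" "balanced_mode N A' B'"
      "\<exists>j<N. A' j \<noteq> 0 \<or> B' j \<noteq> 0"
      using symmetric_mode_exists[OF \<open>N \<ge> 1\<close>] P unfolding z P_mandarin_s_restr by blast
    then have "std_cond N o2 t2 l k A' B' \<and> (\<exists>j<N. A' j \<noteq> 0 \<or> B' j \<noteq> 0)"
      using symmetric_std_cond_balancedD[OF bal2 \<open>k > 0\<close>] by blast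
    then show ?thesis
      unfolding Tset_def by (intro UnI1) (use positive std2 in blast)
  next
    case zero
    then show ?thesis
      unfolding Tset_def by (rule UnI2)
  qed
qed

theorem mainTheorem14:
  fixes N :: nat
  assumes "N \<ge> 1"
  shows "T_flower_sym N = T_mandarin_s N \<and>
         (\<exists>c :: complex. \<forall>z. P_flower_sym N z = c * P_mandarin_s N z)"
proof
  have "P_flower_sym N z = 0 \<longleftrightarrow> P_mandarin_s N z = 0" for z
    using P_flower_sym_eq[OF assms] assms by simp
  then show "T_flower_sym N = T_mandarin_s N"
    unfolding T_flower_sym_def T_mandarin_s_def
    using Tset_symmetric_transfer[OF assms symmetric_std_cond_balanced_flower
        symmetric_std_cond_balanced_mandarin]
      Tset_symmetric_transfer[OF assms symmetric_std_cond_balanced_mandarin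
        symmetric_std_cond_balanced_flower]
    by auto
  show "\<exists>c :: complex. \<forall>z. P_flower_sym N z = c * P_mandarin_s N z"
    using P_flower_sym_eq[OF assms] by (intro exI[of _ "- 1 / of_nat N"]) simp
qed

end
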